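(* Fix a node $t$ whose neighbor set is partitioned into a primary set $\mathcal{S}^*$ and a secondary set $\mathcal{S}^c$, with nonnegative attention weights $\alpha_{t,s}$ and message vectors $m_{s\to t}\in\mathbb{R}^d$, and one-step aggregation $h_t=\sum_{s\in\mathcal{S}^*\cup\mathcal{S}^c}\alpha_{t,s}\,m_{s\to t}$. Let $A^*(t):=\sum_{s\in\mathcal{S}^*}\alpha_{t,s}$ and $h_t^*:=\sum_{s\in\mathcal{S}^*}\alpha_{t,s}\,m_{s\to t}$. Let the classifier logits be $z_k=w_k^\top h_t$ with $w_k\in\mathbb{R}^d$, and let $\mathcal{P}(t)$ be the set of positive labels of $t$, with $L:=|\mathcal{P}(t)|$. Assume (i) $\|m_{s\to t}\|\le M$ for all $s\in\mathcal{S}^*$, and (ii) there exist constants $a>0$ and $b\le aM$ such that $z_k\le a\|h_t^*\|+b$ for each positive label $k\in\mathcal{P}(t)$. Then $$\sum_{k\in\mathcal{P}(t)}-\log\sigma(z_k)\;\ge\;L\cdot\Bigl(-\log\sigma\bigl(aMA^*(t)+b\bigr)\Bigr).$$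
   Context: $\sigma(x)=1/(1+e^{-x})$ is the logistic sigmoid. The attention weights are softmax weights over the neighbors of $t$ (in particular nonnegative). *)

theory Defs
  imports "HOL-Analysis.Analysis"
begin

definition sigmoid :: "real \<Rightarrow> real" where
  "sigmoid x = 1 / (1 + exp (- x))"

end

theory Submission
  imports Defs
begin

(* The message bound and the triangle inequality give norm h* <= M A*, so every
   positive logit is at most a M A* + b; as the logistic loss -ln sigmoid is
   decreasing, each of the L loss terms is at least -ln sigmoid (a M A* + b). *)

lemma neg_ln_sigmoid_eq: "- ln (sigmoid x) = ln (1 + exp (- x))"
  unfolding sigmoid_def by (simp add: ln_div add_pos_pos)

lemma neg_ln_sigmoid_antimono: "x \<le> y \<Longrightarrow> - ln (sigmoid y) \<le> - ln (sigmoid x)"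
  unfolding neg_ln_sigmoid_eq by (simp add: add_pos_pos)

lemma norm_sum_scaleR_le:
  fixes m :: "'a \<Rightarrow> 'v::real_normed_vector"
  assumes "\<And>s. s \<in> S \<Longrightarrow> alpha s \<ge> 0"
    and "\<And>s. s \<in> S \<Longrightarrow> norm (m s) \<le> M"
  shows "norm (\<Sum>s\<in>S. alpha s *\<^sub>R m s) \<le> M * (\<Sum>s\<in>S. alpha s)"
proof -
  have "norm (\<Sum>s\<in>S. alpha s *\<^sub>R m s) \<le> (\<Sum>s\<in>S. norm (alpha s *\<^sub>R m s))"
    by (rule norm_sum)
  also have "\<dots> \<le> (\<Sum>s\<in>S. alpha s * M)"
    by (rule sum_mono) (simp add: assms mult_left_mono)
  finally show ?thesis
    by (simp add: sum_distrib_left mult.commute)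
qed

theorem theoremA2:
  fixes Sstar Sc :: "'n set"
    and alpha :: "'n \<Rightarrow> real"
    and m :: "'n \<Rightarrow> 'v::euclidean_space"
    and w :: "'k \<Rightarrow> 'v"
    and P :: "'k set"
    and M a b :: real
  assumes fin_star: "finite Sstar" and fin_c: "finite Sc"
    and disj: "Sstar \<inter> Sc = {}"
    and alpha_nonneg: "\<And>s. s \<in> Sstar \<union> Sc \<Longrightarrow> alpha s \<ge> 0"
    and finP: "finite P"
    and m_bound: "\<And>s. s \<in> Sstar \<Longrightarrow> norm (m s) \<le> M"
    and a_pos: "a > 0" and b_le: "b \<le> a * M"
    and logit_bound: "\<And>k. k \<in> P \<Longrightarrow>
        w k \<bullet> (\<Sum>s\<in>Sstar \<union> Sc. alpha s *\<^sub>R m s)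
          \<le> a * norm (\<Sum>s\<in>Sstar. alpha s *\<^sub>R m s) + b"
  shows "(\<Sum>k\<in>P. - ln (sigmoid (w k \<bullet> (\<Sum>s\<in>Sstar \<union> Sc. alpha s *\<^sub>R m s))))
           \<ge> real (card P) * (- ln (sigmoid (a * M * (\<Sum>s\<in>Sstar. alpha s) + b)))"
proof -
  have "norm (\<Sum>s\<in>Sstar. alpha s *\<^sub>R m s) \<le> M * (\<Sum>s\<in>Sstar. alpha s)"
    using alpha_nonneg m_bound by (intro norm_sum_scaleR_le) auto
  then have "a * norm (\<Sum>s\<in>Sstar. alpha s *\<^sub>R m s) \<le> a * M * (\<Sum>s\<in>Sstar. alpha s)"
    using a_pos by (simp add: mult.assoc)
  then have "w k \<bullet> (\<Sum>s\<in>Sstar \<union> Sc. alpha s *\<^sub>R m s) \<le> a * M * (\<Sum>s\<in>Sstar. alpha s) + b"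
    if "k \<in> P" for k
    using logit_bound[OF that] by linarith
  then show ?thesis
    by (intro sum_bounded_below neg_ln_sigmoid_antimono)
qed

end
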